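(* Let $G$ be a graph with no isolated vertex and $H$ a nontrivial graph with $\gamma(H)=1$. Then there exists a $\gamma_{(1,0,0)}^s(G\circ H)$-function $f$ such that $f(V(H_u))=\sum_{y\in V(H)}f(u,y)\le2$ for every $u\in V(G)$.
   Context: All graphs are finite and simple; nontrivial means at least two vertices; $\gamma(H)$ is the domination number. For a graph $G$, a function $f:V(G)\to\{0,1,2\}$ is a $(1,0,0)$-dominating function if every vertex $v$ with $f(v)=0$ satisfies $\sum_{u\in N(v)}f(u)\ge1$ ($N(v)$ the open neighbourhood). For adjacent $v,u$ with $f(v)=0$, $f(u)>0$, $f_{u\to v}$ is defined by $f_{u\to v}(v)=1$, $f_{u\to v}(u)=f(u)-1$, $f_{u\to v}(x)=f(x)$ otherwise. $f$ is a secure $(1,0,0)$-dominating function if it is $(1,0,0)$-dominating and for every $v$ with $f(v)=0$ there is $u\in N(v)$ with $f(u)>0$ such that $f_{u\to v}$ is $(1,0,0)$-dominating. $\gamma_{(1,0,0)}^s(G)$ (the weak Roman domination number) is the minimum of $\sum_v f(v)$ over such functions, and a $\gamma_{(1,0,0)}^s(G)$-function is one attaining this minimum. The lexicographic product $G\circ H$ has vertex set $V(G)\times V(H)$, with $(u,v)(x,y)$ an edge iff $ux\in E(G)$, or $u=x$ and $vy\in E(H)$; $H_u$ is the subgraph induced by $\{u\}\times V(H)$. *)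

theory Defs
  imports Main
begin

definition graph :: "'a set \<Rightarrow> ('a \<Rightarrow> 'a \<Rightarrow> bool) \<Rightarrow> bool" where
  "graph V E \<longleftrightarrow> finite V \<and> (\<forall>x y. E x y \<longrightarrow> x \<in> V \<and> y \<in> V)
     \<and> (\<forall>x y. E x y \<longrightarrow> E y x) \<and> (\<forall>x. \<not> E x x)"

definition nbhd :: "'a set \<Rightarrow> ('a \<Rightarrow> 'a \<Rightarrow> bool) \<Rightarrow> 'a \<Rightarrow> 'a set" where
  "nbhd V E v = {u \<in> V. E v u}"

definition no_isolated :: "'a set \<Rightarrow> ('a \<Rightarrow> 'a \<Rightarrow> bool) \<Rightarrow> bool" where
  "no_isolated V E \<longleftrightarrow> (\<forall>v\<in>V. nbhd V E v \<noteq> {})"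

definition dominating_set :: "'a set \<Rightarrow> ('a \<Rightarrow> 'a \<Rightarrow> bool) \<Rightarrow> 'a set \<Rightarrow> bool" where
  "dominating_set V E D \<longleftrightarrow> D \<subseteq> V \<and> (\<forall>v \<in> V - D. \<exists>u\<in>D. E v u)"

definition domination_number :: "'a set \<Rightarrow> ('a \<Rightarrow> 'a \<Rightarrow> bool) \<Rightarrow> nat" where
  "domination_number V E = (LEAST k. \<exists>D. dominating_set V E D \<and> card D = k)"

definition lex_vertices :: "'a set \<Rightarrow> 'b set \<Rightarrow> ('a \<times> 'b) set" where
  "lex_vertices VG VH = VG \<times> VH"

definition lex_edge :: "'a set \<Rightarrow> ('a \<Rightarrow> 'a \<Rightarrow> bool) \<Rightarrow> 'b set \<Rightarrow> ('b \<Rightarrow> 'b \<Rightarrow> bool)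
     \<Rightarrow> 'a \<times> 'b \<Rightarrow> 'a \<times> 'b \<Rightarrow> bool" where
  "lex_edge VG EG VH EH p q \<longleftrightarrow> p \<in> VG \<times> VH \<and> q \<in> VG \<times> VH \<and>
     (EG (fst p) (fst q) \<or> (fst p = fst q \<and> EH (snd p) (snd q)))"

definition labelling :: "'a set \<Rightarrow> ('a \<Rightarrow> nat) \<Rightarrow> bool" where
  "labelling V f \<longleftrightarrow> (\<forall>v\<in>V. f v \<le> 2) \<and> (\<forall>v. v \<notin> V \<longrightarrow> f v = 0)"

definition dom100 :: "'a set \<Rightarrow> ('a \<Rightarrow> 'a \<Rightarrow> bool) \<Rightarrow> ('a \<Rightarrow> nat) \<Rightarrow> bool" where
  "dom100 V E f \<longleftrightarrow> labelling V f \<and>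
     (\<forall>v\<in>V. f v = 0 \<longrightarrow> (\<Sum>u\<in>nbhd V E v. f u) \<ge> 1)"

definition move :: "('a \<Rightarrow> nat) \<Rightarrow> 'a \<Rightarrow> 'a \<Rightarrow> 'a \<Rightarrow> nat" where
  "move f u v = (\<lambda>x. if x = v then 1 else if x = u then f u - 1 else f x)"

definition secure_dom100 :: "'a set \<Rightarrow> ('a \<Rightarrow> 'a \<Rightarrow> bool) \<Rightarrow> ('a \<Rightarrow> nat) \<Rightarrow> bool" where
  "secure_dom100 V E f \<longleftrightarrow> dom100 V E f \<and>
     (\<forall>v\<in>V. f v = 0 \<longrightarrow> (\<exists>u\<in>nbhd V E v. f u > 0 \<and> dom100 V E (move f u v)))"

definition weight :: "'a set \<Rightarrow> ('a \<Rightarrow> nat) \<Rightarrow> nat" where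
  "weight V f = (\<Sum>v\<in>V. f v)"

definition wrd_number :: "'a set \<Rightarrow> ('a \<Rightarrow> 'a \<Rightarrow> bool) \<Rightarrow> nat" where
  "wrd_number V E = (LEAST k. \<exists>f. secure_dom100 V E f \<and> weight V f = k)"

definition wrd_function :: "'a set \<Rightarrow> ('a \<Rightarrow> 'a \<Rightarrow> bool) \<Rightarrow> ('a \<Rightarrow> nat) \<Rightarrow> bool" where
  "wrd_function V E f \<longleftrightarrow> secure_dom100 V E f \<and> weight V f = wrd_number V E"

end

theory Submission
  imports Defs
begin

text \<open>Since \<open>\<gamma>(H) = 1\<close>, \<open>H\<close> has a vertex \<open>h\<close> adjacent to all others. If a
minimum secure \<open>(1,0,0)\<close>-dominating function \<open>f\<close> of \<open>G \<circ> H\<close> put weight more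
than 2 on a layer \<open>H\<^sub>u\<close>, replace it there by 2 at \<open>(u, h)\<close> and 0 elsewhere on \<open>H\<^sub>u\<close>.
Only the neighbourhoods of vertices of \<open>H\<^sub>u\<close> and of the layers \<open>H\<^sub>x\<close> with \<open>x\<close>
adjacent to \<open>u\<close> meet \<open>H\<^sub>u\<close>, and all of them contain \<open>(u, h)\<close>, which keeps
weight 1 even after a unit moves away from it. So the new function is again
secure \<open>(1,0,0)\<close>-dominating but lighter, a contradiction. Hence every minimum
function has the property.\<close>

lemma domination_number_1_universal_vertex:
  assumes "domination_number V E = 1"
  obtains h where "h \<in> V" "\<And>y. y \<in> V \<Longrightarrow> y \<noteq> h \<Longrightarrow> E y h"
proof -
  have "\<exists>k D. dominating_set V E D \<and> card D = k"
    unfolding dominating_set_def by blast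
  then have "\<exists>D. dominating_set V E D \<and> card D = domination_number V E"
    unfolding domination_number_def by (rule LeastI_ex)
  then obtain D where "dominating_set V E D" "card D = 1"
    using assms by auto
  then obtain h where "D = {h}" "dominating_set V E {h}"
    by (metis card_1_singletonE)
  then show thesis
    using that unfolding dominating_set_def by auto
qed

lemma wrd_number_le:
  assumes "secure_dom100 V E f"
  shows "wrd_number V E \<le> weight V f"
  unfolding wrd_number_def by (rule Least_le) (use assms in auto)

lemma wrd_function_exists: "\<exists>f. wrd_function V E f"
proof -
  have "secure_dom100 V E (\<lambda>v. if v \<in> V then 1 else 0)"
    unfolding secure_dom100_def dom100_def labelling_def by auto
  then have "\<exists>k f. secure_dom100 V E f \<and> weight V f = k"
    by blast
  then show ?thesis
    unfolding wrd_function_def wrd_number_def by (rule LeastI_ex)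
qed

lemma labelling_move:
  assumes "labelling V f" "u \<in> V" "v \<in> V"
  shows "labelling V (move f u v)"
  using assms unfolding labelling_def move_def by auto

lemma weight_product_less_layer:
  fixes f g :: "'a \<times> 'b \<Rightarrow> nat"
  assumes "finite A" "finite B" "u \<in> A"
    and agree: "\<And>p. fst p \<noteq> u \<Longrightarrow> g p = f p"
    and less: "(\<Sum>y\<in>B. g (u, y)) < (\<Sum>y\<in>B. f (u, y))"
  shows "weight (A \<times> B) g < weight (A \<times> B) f"
proof -
  have weight_eq: "weight (A \<times> B) k = (\<Sum>y\<in>B. k (u, y)) + (\<Sum>x\<in>A - {u}. \<Sum>y\<in>B. k (x, y))"
    for k :: "'a \<times> 'b \<Rightarrow> nat"
  proof -
    have "weight (A \<times> B) k = (\<Sum>x\<in>A. \<Sum>y\<in>B. k (x, y))"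
      unfolding weight_def by (simp add: sum.cartesian_product)
    then show ?thesis
      using assms(1,3) by (simp add: sum.remove)
  qed
  have "(\<Sum>x\<in>A - {u}. \<Sum>y\<in>B. g (x, y)) = (\<Sum>x\<in>A - {u}. \<Sum>y\<in>B. f (x, y))"
    using agree by simp
  then show ?thesis
    using less by (simp add: weight_eq)
qed

locale lex_universal_vertex =
  fixes VG :: "'a set" and EG :: "'a \<Rightarrow> 'a \<Rightarrow> bool"
    and VH :: "'b set" and EH :: "'b \<Rightarrow> 'b \<Rightarrow> bool" and h :: 'b
  assumes finite_VG: "finite VG" and finite_VH: "finite VH"
    and h_in_VH: "h \<in> VH" and universal: "\<And>y. y \<in> VH \<Longrightarrow> y \<noteq> h \<Longrightarrow> EH y h"
begin

abbreviation V :: "('a \<times> 'b) set" where "V \<equiv> VG \<times> VH"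
abbreviation E :: "'a \<times> 'b \<Rightarrow> 'a \<times> 'b \<Rightarrow> bool" where "E \<equiv> lex_edge VG EG VH EH"

definition concentrate :: "('a \<times> 'b \<Rightarrow> nat) \<Rightarrow> 'a \<Rightarrow> 'a \<times> 'b \<Rightarrow> nat" where
  "concentrate f u = (\<lambda>p. if fst p = u then (if snd p = h then 2 else 0) else f p)"

lemma hub_in_nbhd:
  assumes "u \<in> VG" "p \<in> V" "p \<noteq> (u, h)" "fst p = u \<or> EG (fst p) u"
  shows "(u, h) \<in> nbhd V E p"
  using assms h_in_VH universal[of "snd p"]
  unfolding nbhd_def lex_edge_def by (cases p) auto

lemma dom100_update_layer:
  assumes u: "u \<in> VG"
    and dom_g: "dom100 V E g" and lab_g': "labelling V g'"
    and agree: "\<And>p. fst p \<noteq> u \<Longrightarrow> g' p = g p"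
    and hub: "g' (u, h) \<ge> 1"
  shows "dom100 V E g'"
proof -
  have "(\<Sum>q\<in>nbhd V E p. g' q) \<ge> 1" if p: "p \<in> V" "g' p = 0" for p
  proof (cases "fst p = u \<or> EG (fst p) u")
    case True
    then have "(u, h) \<in> nbhd V E p"
      using hub_in_nbhd[OF u p(1)] p(2) hub by fastforce
    moreover have "finite (nbhd V E p)"
      using finite_VG finite_VH unfolding nbhd_def by auto
    ultimately have "g' (u, h) \<le> (\<Sum>q\<in>nbhd V E p. g' q)"
      by (intro member_le_sum) auto
    then show ?thesis
      using hub by simp
  next
    case False
    have "fst q \<noteq> u" if "q \<in> nbhd V E p" for q
      using that False unfolding nbhd_def lex_edge_def by auto
    then have "(\<Sum>q\<in>nbhd V E p. g' q) = (\<Sum>q\<in>nbhd V E p. g q)"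
      using agree by (intro sum.cong) auto
    moreover have "g p = 0"
      using agree False p(2) by metis
    ultimately show ?thesis
      using dom_g p(1) unfolding dom100_def by auto
  qed
  then show ?thesis
    using lab_g' unfolding dom100_def by auto
qed

lemma labelling_concentrate:
  assumes "labelling V f" "u \<in> VG"
  shows "labelling V (concentrate f u)"
  using assms h_in_VH unfolding labelling_def concentrate_def by auto

lemma layer_sum_concentrate: "(\<Sum>y\<in>VH. concentrate f u (u, y)) = 2"
proof -
  have "(\<Sum>y\<in>VH. concentrate f u (u, y)) = (\<Sum>y\<in>VH. if y = h then 2 else 0)"
    unfolding concentrate_def by (intro sum.cong) auto
  also have "\<dots> = 2"
    using finite_VH h_in_VH by simp
  finally show ?thesis .
qed

lemma dom100_move_from_hub:
  assumes u: "u \<in> VG" and lab: "labelling V f" and p: "p \<in> V" "p \<noteq> (u, h)"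
    and dom_g: "dom100 V E g"
    and agree: "\<And>q. fst q \<noteq> u \<Longrightarrow> move (concentrate f u) (u, h) p q = g q"
  shows "dom100 V E (move (concentrate f u) (u, h) p)"
proof (rule dom100_update_layer[OF u dom_g _ agree])
  show "labelling V (move (concentrate f u) (u, h) p)"
    using labelling_move[OF labelling_concentrate[OF lab u]] u h_in_VH p(1) by simp
  show "move (concentrate f u) (u, h) p (u, h) \<ge> 1"
    using p(2) unfolding move_def concentrate_def by simp
qed

lemma secure_dom100_concentrate:
  assumes sec: "secure_dom100 V E f" and u: "u \<in> VG"
  shows "secure_dom100 V E (concentrate f u)"
proof -
  let ?f' = "concentrate f u"
  have dom_f: "dom100 V E f" and lab_f: "labelling V f"
    using sec unfolding secure_dom100_def dom100_def by auto
  have dom_f': "dom100 V E ?f'"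
    by (rule dom100_update_layer[OF u dom_f labelling_concentrate[OF lab_f u]])
      (auto simp: concentrate_def)
  have "\<exists>w\<in>nbhd V E p. ?f' w > 0 \<and> dom100 V E (move ?f' w p)"
    if p: "p \<in> V" "?f' p = 0" for p
  proof -
    have p_ne_hub: "p \<noteq> (u, h)"
      using p(2) by (auto simp: concentrate_def)
    have hub_ok: "(u, h) \<in> nbhd V E p \<and> ?f' (u, h) > 0"
      if "fst p = u \<or> EG (fst p) u"
      using hub_in_nbhd[OF u p(1) p_ne_hub that] by (simp add: concentrate_def)
    show ?thesis
    proof (cases "fst p = u")
      case True
      have "dom100 V E (move ?f' (u, h) p)"
        by (rule dom100_move_from_hub[OF u lab_f p(1) p_ne_hub dom_f])
          (use True in \<open>auto simp: move_def concentrate_def\<close>)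
      then show ?thesis
        using hub_ok True by blast
    next
      case False
      then have "f p = 0"
        using p(2) by (simp add: concentrate_def)
      then obtain w where w: "w \<in> nbhd V E p" "f w > 0" and dom_w: "dom100 V E (move f w p)"
        using sec p(1) unfolding secure_dom100_def by blast
      show ?thesis
      proof (cases "fst w = u")
        case True
        then have "EG (fst p) u"
          using w(1) False unfolding nbhd_def lex_edge_def by auto
        moreover have "dom100 V E (move ?f' (u, h) p)"
          by (rule dom100_move_from_hub[OF u lab_f p(1) p_ne_hub dom_w])
            (use True in \<open>auto simp: move_def concentrate_def\<close>)
        ultimately show ?thesis
          using hub_ok by blast
      next
        case w_off_layer: False
        have "dom100 V E (move ?f' w p)"
        proof (rule dom100_update_layer[OF u dom_w])
          show "labelling V (move ?f' w p)"
            using labelling_move[OF labelling_concentrate[OF lab_f u]] w(1) p(1)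
            unfolding nbhd_def by auto
          show "move ?f' w p q = move f w p q" if "fst q \<noteq> u" for q
            using that w_off_layer by (simp add: move_def concentrate_def)
          show "move ?f' w p (u, h) \<ge> 1"
            using False w_off_layer by (auto simp: move_def concentrate_def)
        qed
        then show ?thesis
          using w w_off_layer by (auto simp: concentrate_def)
      qed
    qed
  qed
  then show ?thesis
    using dom_f' unfolding secure_dom100_def by blast
qed

lemma wrd_function_layer_sum_le_2:
  assumes "wrd_function V E f" "u \<in> VG"
  shows "(\<Sum>y\<in>VH. f (u, y)) \<le> 2"
proof (rule ccontr)
  assume "\<not> (\<Sum>y\<in>VH. f (u, y)) \<le> 2"
  then have "(\<Sum>y\<in>VH. concentrate f u (u, y)) < (\<Sum>y\<in>VH. f (u, y))"
    by (simp add: layer_sum_concentrate)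
  then have "weight V (concentrate f u) < weight V f"
    by (intro weight_product_less_layer[OF finite_VG finite_VH \<open>u \<in> VG\<close>])
      (simp_all add: concentrate_def)
  moreover have "wrd_number V E \<le> weight V (concentrate f u)"
    using assms secure_dom100_concentrate wrd_number_le unfolding wrd_function_def by blast
  ultimately show False
    using assms(1) unfolding wrd_function_def by simp
qed

end

theorem lemma14:
  fixes VG :: "'a set" and EG :: "'a \<Rightarrow> 'a \<Rightarrow> bool"
    and VH :: "'b set" and EH :: "'b \<Rightarrow> 'b \<Rightarrow> bool"
  assumes "graph VG EG" and "no_isolated VG EG"
    and "graph VH EH" and "card VH \<ge> 2" and "domination_number VH EH = 1"
  shows "\<exists>f. wrd_function (lex_vertices VG VH) (lex_edge VG EG VH EH) f \<and>
           (\<forall>u\<in>VG. (\<Sum>y\<in>VH. f (u, y)) \<le> 2)"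
proof -
  obtain h where "h \<in> VH" "\<And>y. y \<in> VH \<Longrightarrow> y \<noteq> h \<Longrightarrow> EH y h"
    using domination_number_1_universal_vertex[OF assms(5)] by blast
  then interpret lex_universal_vertex VG EG VH EH h
    using assms(1,3) unfolding graph_def by unfold_locales auto
  obtain f where "wrd_function V E f"
    using wrd_function_exists by blast
  then show ?thesis
    unfolding lex_vertices_def using wrd_function_layer_sum_le_2 by blast
qed

end
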